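(* For a ring $R$, the following conditions are equivalent: (1) $R$ is strongly $n$-torsion clean for some $n\in\mathbb{N}$; (2) $R$ is strongly clean and the unit group $U(R)$ has finite exponent.
   Context: All rings are associative with identity. A ring is strongly clean if every element is a sum $e+u$ of an idempotent $e$ and a unit $u$ with $eu=ue$. A ring $R$ is strongly $n$-torsion clean if every $r\in R$ can be written $r=e+u$ with $e^2=e$, $u\in U(R)$, $u^n=1$ and $eu=ue$, and $n$ is the smallest natural number with this property. *)

theory Defs
  imports Main
begin

text \<open>Rings are modelled by the type class ring_1 (associative, with identity,
not necessarily commutative). Units are two-sided invertible elements.\<close>

definition ring_unit :: "'a::ring_1 \<Rightarrow> bool" where
  "ring_unit u \<longleftrightarrow> (\<exists>v. u * v = 1 \<and> v * u = 1)"

definition strongly_clean :: "'a::ring_1 itself \<Rightarrow> bool" where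
  "strongly_clean _ \<longleftrightarrow>
     (\<forall>r::'a. \<exists>e u. r = e + u \<and> e * e = e \<and> ring_unit u \<and> e * u = u * e)"

definition n_torsion_clean_decomp :: "'a::ring_1 itself \<Rightarrow> nat \<Rightarrow> bool" where
  "n_torsion_clean_decomp _ n \<longleftrightarrow>
     (\<forall>r::'a. \<exists>e u. r = e + u \<and> e * e = e \<and> ring_unit u \<and> u ^ n = 1 \<and> e * u = u * e)"

definition strongly_n_torsion_clean :: "'a::ring_1 itself \<Rightarrow> nat \<Rightarrow> bool" where
  "strongly_n_torsion_clean R n \<longleftrightarrow>
     n \<ge> 1 \<and> n_torsion_clean_decomp R n \<and>
     (\<forall>m. 1 \<le> m \<and> m < n \<longrightarrow> \<not> n_torsion_clean_decomp R m)"

definition units_finite_exponent :: "'a::ring_1 itself \<Rightarrow> bool" where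
  "units_finite_exponent _ \<longleftrightarrow> (\<exists>m::nat. m \<ge> 1 \<and> (\<forall>u::'a. ring_unit u \<longrightarrow> u ^ m = 1))"

end

theory Submission
  imports Defs "HOL-Library.FuncSet"
begin

text \<open>Applied to \<open>r = 3 = e + v\<close>, a decomposition with \<open>v ^ n = 1\<close> gives \<open>e 2 ^ n = e\<close> and
  \<open>(1 - e) 3 ^ n = 1 - e\<close>, so \<open>(2 ^ n - 1) (3 ^ n - 1) = 0\<close> and the characteristic \<open>c\<close> is
  positive. For a unit \<open>u = e + v\<close>, the corner \<open>(1 - e) u = (1 - e) v\<close> has order dividing \<open>n\<close>,
  while \<open>e u = e (1 + s)\<close> with \<open>s = e v\<close> and \<open>s ^ Suc n = s\<close>; so the powers of \<open>e u\<close> are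
  combinations of \<open>1, s, \<dots>, s ^ n\<close> with coefficients mod \<open>c\<close>, and \<open>e u\<close> has order at most
  \<open>c ^ Suc n\<close>. Conversely, if all units satisfy \<open>u ^ m = 1\<close>, a strongly clean ring is
  \<open>m\<close>-torsion clean, and the least such exponent is the one asked for.\<close>

lemma power_idem_mult:
  fixes f x :: "'a::ring_1"
  assumes idem: "f * f = f" and comm: "f * x = x * f" and "0 < n"
  shows "(f * x) ^ n = f * x ^ n"
  using \<open>0 < n\<close>
proof (induction n rule: nat_induct_non_zero)
  case 1
  then show ?case by simp
next
  case (Suc n)
  have "x ^ n * f = f * x ^ n"
    using power_commuting_commutes comm by metis
  then have "f * x ^ n * (f * x) = f * f * x ^ n * x"
    by (metis mult.assoc)
  then show ?case
    by (simp only: power_Suc2 Suc.IH idem mult.assoc)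
qed

lemma idem_mult_power_cong:
  fixes f x y :: "'a::ring_1"
  assumes "f * f = f" "f * x = x * f" "f * y = y * f" "f * x = f * y"
  shows "f * x ^ n = f * y ^ n"
proof (cases "n = 0")
  case False
  then show ?thesis
    using power_idem_mult[of f x n] power_idem_mult[of f y n] assms by simp
qed simp

lemma clean_decomp_corners:
  fixes r e v :: "'a::ring_1"
  assumes "r = e + v" "e * e = e" "e * v = v * e" "v ^ n = 1"
  shows "e * (r - 1) ^ n = e" and "(1 - e) * r ^ n = 1 - e"
proof -
  have "e * (r - 1) ^ n = e * v ^ n"
    by (rule idem_mult_power_cong) (use assms in \<open>simp_all add: algebra_simps\<close>)
  then show "e * (r - 1) ^ n = e"
    using assms(4) by simp
  have "(1 - e) * r ^ n = (1 - e) * v ^ n"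
    by (rule idem_mult_power_cong) (use assms in \<open>simp_all add: algebra_simps\<close>)
  then show "(1 - e) * r ^ n = 1 - e"
    using assms(4) by simp
qed

text \<open>Both factors are polynomials in \<open>r\<close>, hence commute with each other and with \<open>e\<close>;
  the first is killed by \<open>e\<close>, the second by \<open>1 - e\<close>.\<close>

lemma clean_decomp_annihilator:
  fixes r e v :: "'a::ring_1"
  assumes "r = e + v" "e * e = e" "e * v = v * e" "v ^ n = 1"
  shows "((r - 1) ^ n - 1) * (r ^ n - 1) = 0"
proof -
  define A where "A = (r - 1) ^ n - 1"
  define B where "B = r ^ n - 1"
  have eA: "e * A = 0" and eB: "(1 - e) * B = 0"
    using clean_decomp_corners[OF assms] by (simp_all add: A_def B_def algebra_simps)
  have "(r - 1) * e = e * (r - 1)" and "r * e = e * r"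
    using assms by (simp_all add: algebra_simps)
  then have "(r - 1) ^ n * e = e * (r - 1) ^ n" and "r ^ n * e = e * r ^ n"
    by (simp_all only: power_commuting_commutes)
  then have Ae: "A * e = e * A" and Be: "B * (1 - e) = (1 - e) * B"
    by (simp_all add: A_def B_def algebra_simps)
  have "r * (r - 1) = (r - 1) * r"
    by (simp add: algebra_simps)
  then have "(r - 1) * r ^ n = r ^ n * (r - 1)"
    by (metis power_commuting_commutes)
  then have "(r - 1) ^ n * r ^ n = r ^ n * (r - 1) ^ n"
    by (rule power_commuting_commutes)
  then have AB: "A * B = B * A"
    by (simp add: A_def B_def algebra_simps)
  have "A * B = A * B * e + A * B * (1 - e)"
    by (simp add: algebra_simps)
  also have "\<dots> = B * (A * e) + A * (B * (1 - e))"
    by (metis AB mult.assoc)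
  also have "\<dots> = 0"
    by (simp add: Ae Be eA eB)
  finally show ?thesis
    by (simp add: A_def B_def)
qed

lemma torsion_clean_of_nat_eq_zero:
  assumes "n_torsion_clean_decomp TYPE('a::ring_1) n"
  shows "(of_nat ((2 ^ n - 1) * (3 ^ n - 1)) :: 'a) = 0"
proof -
  obtain e v :: 'a where "3 = e + v" "e * e = e" "e * v = v * e" "v ^ n = 1"
    using assms unfolding n_torsion_clean_decomp_def by blast
  then have "((3 - 1) ^ n - 1) * (3 ^ n - 1) = (0 :: 'a)"
    by (rule clean_decomp_annihilator)
  then show ?thesis
    by (simp add: of_nat_diff)
qed

definition nat_poly_values :: "'a::ring_1 \<Rightarrow> nat \<Rightarrow> 'a set" where
  "nat_poly_values s N = range (\<lambda>f. \<Sum>i\<le>N. of_nat (f i) * s ^ i)"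

lemma nat_poly_valuesI: "(\<Sum>i\<le>N. of_nat (f i) * s ^ i) \<in> nat_poly_values s N"
  unfolding nat_poly_values_def by (rule rangeI)

lemma nat_poly_values_add:
  assumes "x \<in> nat_poly_values s N" "y \<in> nat_poly_values s N"
  shows "x + y \<in> nat_poly_values s N"
proof -
  obtain f g where "x = (\<Sum>i\<le>N. of_nat (f i) * s ^ i)" "y = (\<Sum>i\<le>N. of_nat (g i) * s ^ i)"
    using assms unfolding nat_poly_values_def by blast
  then have sum_eq: "x + y = (\<Sum>i\<le>N. of_nat (f i + g i) * s ^ i)"
    by (simp add: sum.distrib distrib_right)
  show ?thesis
    unfolding sum_eq by (rule nat_poly_valuesI)
qed

lemma monomial_in_nat_poly_values:
  assumes "j \<le> N"
  shows "of_nat k * s ^ j \<in> nat_poly_values s N"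
proof -
  have monomial_eq: "of_nat k * s ^ j = (\<Sum>i\<le>N. of_nat (if i = j then k else 0) * s ^ i)"
    using assms by (simp add: if_distrib[where f = of_nat] if_distrib[where f = "\<lambda>c. c * _"] cong: if_cong)
  show ?thesis
    unfolding monomial_eq by (rule nat_poly_valuesI)
qed

lemma nat_poly_values_sum:
  assumes "finite A" "\<And>i. i \<in> A \<Longrightarrow> g i \<in> nat_poly_values s N"
  shows "sum g A \<in> nat_poly_values s N"
  using assms
proof (induction A rule: finite_induct)
  case empty
  then show ?case
    using monomial_in_nat_poly_values[of 0 N 0 s] by simp
qed (simp add: nat_poly_values_add)

text \<open>Since \<open>s ^ Suc N = s\<close>, multiplying by \<open>s\<close> maps the top monomial \<open>s ^ N\<close> back to \<open>s\<close>.\<close>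

lemma nat_poly_values_mult_right:
  fixes s :: "'a::ring_1"
  assumes period: "s ^ Suc N = s" and "0 < N" and x: "x \<in> nat_poly_values s N"
  shows "x * s \<in> nat_poly_values s N"
proof -
  obtain f where "x = (\<Sum>i\<le>N. of_nat (f i) * s ^ i)"
    using x unfolding nat_poly_values_def by blast
  then have xs: "x * s = (\<Sum>i\<le>N. of_nat (f i) * s ^ Suc i)"
    by (simp add: sum_distrib_right mult.assoc power_commutes)
  have "of_nat (f i) * s ^ Suc i \<in> nat_poly_values s N" if "i \<le> N" for i
  proof (cases "i = N")
    case True
    then show ?thesis
      using period \<open>0 < N\<close> monomial_in_nat_poly_values[of 1 N "f N" s] by simp
  next
    case False
    then show ?thesis
      using that monomial_in_nat_poly_values[of "Suc i" N] by simp
  qed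
  then show ?thesis
    unfolding xs by (intro nat_poly_values_sum) auto
qed

lemma one_plus_power_in_nat_poly_values:
  fixes s :: "'a::ring_1"
  assumes "s ^ Suc N = s" "0 < N"
  shows "(1 + s) ^ k \<in> nat_poly_values s N"
proof (induction k)
  case 0
  then show ?case
    using monomial_in_nat_poly_values[of 0 N 1 s] by simp
next
  case (Suc k)
  have "(1 + s) ^ Suc k = (1 + s) ^ k + (1 + s) ^ k * s"
    by (simp only: power_Suc2 distrib_left mult_1_right)
  then show ?case
    using Suc.IH nat_poly_values_mult_right[OF assms Suc.IH] by (simp add: nat_poly_values_add)
qed

text \<open>In characteristic dividing \<open>c\<close> every coefficient may be reduced modulo \<open>c\<close>.\<close>

lemma nat_poly_values_subset_image:
  fixes s :: "'a::ring_1"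
  assumes "of_nat c = (0::'a)" "0 < c"
  shows "nat_poly_values s N \<subseteq> (\<lambda>f. \<Sum>i\<le>N. of_nat (f i) * s ^ i) ` ({..N} \<rightarrow>\<^sub>E {..<c})"
proof
  fix x
  assume "x \<in> nat_poly_values s N"
  then obtain f where x: "x = (\<Sum>i\<le>N. of_nat (f i) * s ^ i)"
    unfolding nat_poly_values_def by blast
  have "(of_nat (f i) :: 'a) = of_nat (f i mod c)" for i
  proof -
    have "(of_nat (f i) :: 'a) = of_nat (c * (f i div c) + f i mod c)"
      by simp
    then show ?thesis
      using assms(1) by (simp only: of_nat_add of_nat_mult) simp
  qed
  then have "x = (\<Sum>i\<le>N. of_nat (restrict (\<lambda>i. f i mod c) {..N} i) * s ^ i)"
    unfolding x by (intro sum.cong) simp_all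
  moreover have "restrict (\<lambda>i. f i mod c) {..N} \<in> {..N} \<rightarrow>\<^sub>E {..<c}"
    using assms(2) by simp
  ultimately show "x \<in> (\<lambda>f. \<Sum>i\<le>N. of_nat (f i) * s ^ i) ` ({..N} \<rightarrow>\<^sub>E {..<c})"
    by blast
qed

lemma card_nat_poly_values_le:
  fixes s :: "'a::ring_1"
  assumes "of_nat c = (0::'a)" "0 < c"
  shows "finite (nat_poly_values s N)" and "card (nat_poly_values s N) \<le> c ^ Suc N"
proof -
  let ?image = "(\<lambda>f. \<Sum>i\<le>N. of_nat (f i) * s ^ i) ` ({..N} \<rightarrow>\<^sub>E {..<c})"
  have subset: "nat_poly_values s N \<subseteq> ?image"
    using assms by (rule nat_poly_values_subset_image)
  have fin: "finite ({..N} \<rightarrow>\<^sub>E {..<c})"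
    by (simp add: finite_PiE)
  then have "finite ?image"
    by (rule finite_imageI)
  then show "finite (nat_poly_values s N)"
    using subset by (rule finite_subset[rotated])
  have "card (nat_poly_values s N) \<le> card ?image"
    using \<open>finite ?image\<close> subset by (rule card_mono)
  also have "\<dots> \<le> card ({..N} \<rightarrow>\<^sub>E {..<c})"
    using fin by (rule card_image_le)
  also have "\<dots> = c ^ Suc N"
    by (simp add: card_PiE)
  finally show "card (nat_poly_values s N) \<le> c ^ Suc N" .
qed

lemma mult_power_return_le_card:
  fixes x y w :: "'a::monoid_mult"
  assumes inverse: "x * w = 1"
    and T: "finite T" "card T \<le> K" and powers: "\<And>k. y * x ^ k \<in> T"
  shows "\<exists>d. 1 \<le> d \<and> d \<le> K \<and> y * x ^ d = y"
proof -
  have "\<not> inj_on (\<lambda>k. y * x ^ k) {..K}"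
  proof
    assume "inj_on (\<lambda>k. y * x ^ k) {..K}"
    then have "card {..K} \<le> card T"
      using powers T(1) by (intro card_inj_on_le) auto
    then show False
      using T(2) by simp
  qed
  then obtain i j where ij: "i < j" "j \<le> K" "y * x ^ i = y * x ^ j"
    unfolding inj_on_def by (metis atMost_iff linorder_neqE_nat)
  have "x ^ j = x ^ (j - i) * x ^ i"
    using \<open>i < j\<close> by (simp flip: power_add)
  then have "y * x ^ (j - i) = y * x ^ j * w ^ i"
    using left_right_inverse_power[OF inverse, of i] by (simp add: mult.assoc)
  also have "\<dots> = y"
    using left_right_inverse_power[OF inverse, of i] ij(3) by (metis mult.assoc mult_1_right)
  finally show ?thesis
    using ij by (intro exI[of _ "j - i"]) auto
qed

lemma mult_power_dvd_fixed:
  fixes x y :: "'a::monoid_mult"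
  assumes "y * x ^ d = y" "d dvd m"
  shows "y * x ^ m = y"
proof -
  obtain q where "m = d * q"
    using assms(2) by blast
  have "y * x ^ (d * q) = y"
    by (induction q) (simp_all add: assms(1) power_add mult.assoc[symmetric])
  then show ?thesis
    using \<open>m = d * q\<close> by simp
qed

lemma unit_corner_power_return:
  fixes u e v :: "'a::ring_1"
  assumes char: "of_nat c = (0::'a)" "0 < c"
    and unit: "ring_unit u"
    and decomp: "u = e + v" "e * e = e" "e * v = v * e" "v ^ n = 1" and "0 < n"
  shows "\<exists>d. 1 \<le> d \<and> d \<le> c ^ Suc n \<and> e * u ^ d = e"
proof -
  obtain w where inverse: "u * w = 1"
    using unit unfolding ring_unit_def by blast
  define s where "s = e * v"
  have "s ^ n = e"
    using power_idem_mult[of e v n] decomp \<open>0 < n\<close> by (simp add: s_def)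
  then have period: "s ^ Suc n = s"
    using decomp(2,3) unfolding s_def by (metis mult.assoc power_Suc2)
  have "e * s = s" and "s * e = s"
    using decomp(2,3) unfolding s_def by (metis mult.assoc)+
  then have "e * u = u * e" and "e * (1 + s) = (1 + s) * e" and "e * u = e * (1 + s)"
    using decomp(1-3) by (simp_all add: algebra_simps s_def)
  then have "e * u ^ k = e * (1 + s) ^ k" for k
    using decomp(2) by (intro idem_mult_power_cong)
  then have powers: "e * u ^ k \<in> (*) e ` nat_poly_values s n" for k
    using one_plus_power_in_nat_poly_values[OF period \<open>0 < n\<close>] by blast
  have "finite ((*) e ` nat_poly_values s n)"
    using card_nat_poly_values_le(1)[OF char] by blast
  moreover have "card ((*) e ` nat_poly_values s n) \<le> c ^ Suc n"
    using card_image_le[OF card_nat_poly_values_le(1)[OF char]] card_nat_poly_values_le(2)[OF char]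
    by (rule le_trans)
  ultimately show ?thesis
    using mult_power_return_le_card[OF inverse _ _ powers] by blast
qed

lemma strongly_clean_if_torsion_clean:
  assumes "n_torsion_clean_decomp TYPE('a::ring_1) n"
  shows "strongly_clean TYPE('a)"
  using assms unfolding n_torsion_clean_decomp_def strongly_clean_def by blast

lemma torsion_clean_if_units_finite_exponent:
  assumes "strongly_clean TYPE('a::ring_1)" "\<forall>u::'a. ring_unit u \<longrightarrow> u ^ m = 1"
  shows "n_torsion_clean_decomp TYPE('a) m"
  using assms unfolding strongly_clean_def n_torsion_clean_decomp_def by blast

text \<open>The factorial is a common multiple of the corner orders, uniformly in the unit.\<close>

lemma units_finite_exponent_if_torsion_clean:
  assumes "1 \<le> n" and decomp: "n_torsion_clean_decomp TYPE('a::ring_1) n"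
  shows "units_finite_exponent TYPE('a)"
proof -
  define c :: nat where "c = (2 ^ n - 1) * (3 ^ n - 1)"
  have char: "of_nat c = (0::'a)"
    unfolding c_def using decomp by (rule torsion_clean_of_nat_eq_zero)
  have "0 < c"
    using \<open>1 \<le> n\<close> one_less_power[of "2::nat" n] one_less_power[of "3::nat" n]
    by (simp add: c_def)
  define M :: nat where "M = fact (c ^ Suc n + n)"
  have "u ^ M = 1" if unit: "ring_unit u" for u :: 'a
  proof -
    obtain e v where uev: "u = e + v" "e * e = e" "e * v = v * e" "v ^ n = 1"
      using decomp unfolding n_torsion_clean_decomp_def by blast
    obtain d where d: "1 \<le> d" "d \<le> c ^ Suc n" "e * u ^ d = e"
      using unit_corner_power_return[OF char \<open>0 < c\<close> unit uev] \<open>1 \<le> n\<close> by auto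
    have "d dvd M" and "n dvd M"
      unfolding M_def using d \<open>1 \<le> n\<close> by (simp_all add: dvd_fact)
    then have "e * u ^ M = e" and "(1 - e) * u ^ M = 1 - e"
      using d(3) clean_decomp_corners(2)[OF uev] by (simp_all add: mult_power_dvd_fixed)
    moreover have "u ^ M = e * u ^ M + (1 - e) * u ^ M"
      by (simp add: algebra_simps)
    ultimately show "u ^ M = 1"
      by simp
  qed
  moreover have "1 \<le> M"
    by (simp add: M_def)
  ultimately show ?thesis
    unfolding units_finite_exponent_def by blast
qed

lemma ex_strongly_n_torsion_clean_iff:
  "(\<exists>n. strongly_n_torsion_clean R n) \<longleftrightarrow> (\<exists>n\<ge>1. n_torsion_clean_decomp R n)"
proof
  assume "\<exists>n\<ge>1. n_torsion_clean_decomp R n"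
  then obtain n where "1 \<le> n \<and> n_torsion_clean_decomp R n"
    "\<And>m. m < n \<Longrightarrow> \<not> (1 \<le> m \<and> n_torsion_clean_decomp R m)"
    using exists_least_iff[of "\<lambda>n. 1 \<le> n \<and> n_torsion_clean_decomp R n"] by blast
  then have "strongly_n_torsion_clean R n"
    unfolding strongly_n_torsion_clean_def by blast
  then show "\<exists>n. strongly_n_torsion_clean R n" ..
qed (auto simp: strongly_n_torsion_clean_def)

theorem theorem2p14:
  shows "(\<exists>n::nat. strongly_n_torsion_clean TYPE('a::ring_1) n) \<longleftrightarrow>
         (strongly_clean TYPE('a) \<and> units_finite_exponent TYPE('a))"
  unfolding ex_strongly_n_torsion_clean_iff
proof
  assume "\<exists>n\<ge>1. n_torsion_clean_decomp TYPE('a) n"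
  then show "strongly_clean TYPE('a) \<and> units_finite_exponent TYPE('a)"
    using strongly_clean_if_torsion_clean units_finite_exponent_if_torsion_clean by blast
next
  assume "strongly_clean TYPE('a) \<and> units_finite_exponent TYPE('a)"
  then show "\<exists>n\<ge>1. n_torsion_clean_decomp TYPE('a) n"
    unfolding units_finite_exponent_def using torsion_clean_if_units_finite_exponent by blast
qed

end
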